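(* Let $\sigma>0$, $\bar\gamma>0$, $c_\infty\ge0$, and for $\gamma\in(0,\bar\gamma]$ let $\tau_\gamma:[0,\infty)\to[0,\infty)$ be non-decreasing with $\tau_\gamma(0)=0$, such that there exist $R_1,L\ge0$, $m>0$ with $\sup_{r>0}\tau_\gamma(r)/r\le1+\gamma L$ and $\sup_{r>R_1}\tau_\gamma(r)/r\le1-\gamma m$ for all $\gamma\in(0,\bar\gamma]$. Let $Q_\gamma$ be the Markov kernel on $[0,\infty)$ $$Q_\gamma(w,A)=\delta_0(A)\int_{\mathbb{R}}\bar p_{\sigma^2\gamma}(\tau_\gamma(w)+\gamma c_\infty,g)\varphi(g)dg+\int_{\mathbb{R}}\mathbb{1}_A(\tau_\gamma(w)+\gamma c_\infty-2\sigma\gamma^{1/2}g)\{1-\bar p_{\sigma^2\gamma}(\tau_\gamma(w)+\gamma c_\infty,g)\}\varphi(g)dg,$$ with $\bar p_{\sigma^2\gamma}(a,g)=1\wedge\varphi_{\sigma^2\gamma}(a-\sigma\sqrt\gamma g)/\varphi_{\sigma^2\gamma}(\sigma\sqrt\gamma g)$. Let $a>0$, $\mathcal W_a^*(w)=e^{aw}-1$, and define $\tilde R_a=1\vee R_1\vee[(4a\sigma^2+2c_\infty)/m]\vee16\sigma^2a/m$, $\lambda_a=\exp(-am\tilde R_a/8)$, $C_a=a(c_\infty+2a\sigma^2)e^{a\bar\gamma(c_\infty+2a\sigma^2)}+2\sigma^2(2\pi)^{-1/2}ae^{(a+2\sigma\bar\gamma^{1/2}a)^2/2}$, $R_a=\tilde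 R_a\vee a^{-1}\log\big(1+C_a/(-\log(\lambda_a)\lambda_a^{2\bar\gamma})\big)$, $\bar\gamma_1=\bar\gamma\wedge1/(-\log\lambda_a)\wedge1/(4\sigma^2)$, $B_a=e^{a(c_\infty+2a\sigma^2+LR_a)}$, $D_a=a(c_\infty+2a\sigma^2+LR_a)e^{a\bar\gamma(c_\infty+2a\sigma^2+LR_a)}+2\sigma^2(2\pi)^{-1/2}ae^{(a+2\sigma\bar\gamma^{1/2}a)^2/2}+2\sigma^2a^2\lambda_a^{2\bar\gamma}\mathcal W_a^*(R_a)$. Then for all $w\ge0$ and $\gamma\in(0,\bar\gamma_1]$, $$Q_\gamma\mathcal W_a^*(w)\le\lambda_a^\gamma\mathcal W_a^*(w)\mathbb{1}_{[R_a,\infty)}(w)+B_a^\gamma\mathcal W_a^*(w)\mathbb{1}_{[0,R_a)}(w)+\gamma D_a\mathbb{1}_{[0,R_a)}(w).$$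
   Context: $\varphi$ is the standard normal density and $\varphi_s(t)=(2\pi s)^{-1/2}e^{-t^2/(2s)}$. *)

theory Defs
  imports "HOL-Probability.Probability"
begin

definition phi_var :: "real \<Rightarrow> real \<Rightarrow> real" where
  "phi_var s t = (2 * pi * s) powr (-1/2) * exp (- t\<^sup>2 / (2 * s))"

definition phi :: "real \<Rightarrow> real" where
  "phi t = (2 * pi) powr (-1/2) * exp (- t\<^sup>2 / 2)"

definition pbar :: "real \<Rightarrow> real \<Rightarrow> real \<Rightarrow> real \<Rightarrow> real" where
  "pbar \<sigma> \<gamma> a g = min 1 (phi_var (\<sigma>\<^sup>2 * \<gamma>) (a - \<sigma> * sqrt \<gamma> * g)
                             / phi_var (\<sigma>\<^sup>2 * \<gamma>) (\<sigma> * sqrt \<gamma> * g))"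

definition Qker :: "real \<Rightarrow> real \<Rightarrow> real \<Rightarrow> (real \<Rightarrow> real) \<Rightarrow> (real \<Rightarrow> ennreal) \<Rightarrow> real \<Rightarrow> ennreal" where
  "Qker \<sigma> cinf \<gamma> \<tau> f w =
     (let x = \<tau> w + \<gamma> * cinf in
       f 0 * (\<integral>\<^sup>+ g. ennreal (pbar \<sigma> \<gamma> x g * phi g) \<partial>lborel)
       + (\<integral>\<^sup>+ g. f (x - 2 * \<sigma> * sqrt \<gamma> * g) * ennreal ((1 - pbar \<sigma> \<gamma> x g) * phi g) \<partial>lborel))"

definition Wstar :: "real \<Rightarrow> real \<Rightarrow> real" where
  "Wstar a w = exp (a * w) - 1"

definition Rtilde :: "real \<Rightarrow> real \<Rightarrow> real \<Rightarrow> real \<Rightarrow> real \<Rightarrow> real" where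
  "Rtilde \<sigma> cinf R1 m a =
     max (max (max 1 R1) ((4 * a * \<sigma>\<^sup>2 + 2 * cinf) / m)) (16 * \<sigma>\<^sup>2 * a / m)"

definition lam :: "real \<Rightarrow> real \<Rightarrow> real \<Rightarrow> real \<Rightarrow> real \<Rightarrow> real" where
  "lam \<sigma> cinf R1 m a = exp (- a * m * Rtilde \<sigma> cinf R1 m a / 8)"

definition Cconst :: "real \<Rightarrow> real \<Rightarrow> real \<Rightarrow> real \<Rightarrow> real" where
  "Cconst \<sigma> cinf gbar a =
     a * (cinf + 2 * a * \<sigma>\<^sup>2) * exp (a * gbar * (cinf + 2 * a * \<sigma>\<^sup>2))
     + 2 * \<sigma>\<^sup>2 * (2 * pi) powr (-1/2) * a * exp ((a + 2 * \<sigma> * sqrt gbar * a)\<^sup>2 / 2)"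

definition Rconst :: "real \<Rightarrow> real \<Rightarrow> real \<Rightarrow> real \<Rightarrow> real \<Rightarrow> real \<Rightarrow> real" where
  "Rconst \<sigma> cinf gbar R1 m a =
     (let lm = lam \<sigma> cinf R1 m a in
      max (Rtilde \<sigma> cinf R1 m a)
          (ln (1 + Cconst \<sigma> cinf gbar a / (- ln lm * lm powr (2 * gbar))) / a))"

definition gamma1 :: "real \<Rightarrow> real \<Rightarrow> real \<Rightarrow> real \<Rightarrow> real \<Rightarrow> real \<Rightarrow> real" where
  "gamma1 \<sigma> cinf gbar R1 m a =
     min (min gbar (1 / (- ln (lam \<sigma> cinf R1 m a)))) (1 / (4 * \<sigma>\<^sup>2))"

definition Bconst :: "real \<Rightarrow> real \<Rightarrow> real \<Rightarrow> real \<Rightarrow> real \<Rightarrow> real \<Rightarrow> real \<Rightarrow> real" where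
  "Bconst \<sigma> cinf gbar R1 L m a =
     exp (a * (cinf + 2 * a * \<sigma>\<^sup>2 + L * Rconst \<sigma> cinf gbar R1 m a))"

definition Dconst :: "real \<Rightarrow> real \<Rightarrow> real \<Rightarrow> real \<Rightarrow> real \<Rightarrow> real \<Rightarrow> real \<Rightarrow> real" where
  "Dconst \<sigma> cinf gbar R1 L m a =
     (let R = Rconst \<sigma> cinf gbar R1 m a; lm = lam \<sigma> cinf R1 m a in
      a * (cinf + 2 * a * \<sigma>\<^sup>2 + L * R) * exp (a * gbar * (cinf + 2 * a * \<sigma>\<^sup>2 + L * R))
      + 2 * \<sigma>\<^sup>2 * (2 * pi) powr (-1/2) * a * exp ((a + 2 * \<sigma> * sqrt gbar * a)\<^sup>2 / 2)
      + 2 * \<sigma>\<^sup>2 * a\<^sup>2 * lm powr (2 * gbar) * Wstar a R)"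

end

theory Submission
  imports Defs
begin

text \<open>Since \<open>Wstar a 0 = 0\<close>, only the move to \<open>y = x - 2 s g\<close> counts, where
  \<open>x = \<tau>(w) + \<gamma> cinf\<close> and \<open>s = \<sigma> sqrt \<gamma>\<close>. Where \<open>y > 0\<close>, the mass \<open>pbar * phi\<close> sent to 0
  equals the Gaussian weight \<open>phi (x/s - g)\<close> of the reflected point, at which \<open>y\<close> becomes \<open>-y\<close>.
  As \<open>exp (a y) + exp (-a y) \<ge> 2\<close>, pairing \<open>g\<close> with its reflection shows that removing this
  mass can only decrease \<open>E exp (a Y) - 1\<close>, so the kernel applied to \<open>Wstar a\<close> is at most
  \<open>E exp (a (x - 2 s G)) - 1 = exp (a x + 2 a\<^sup>2 \<sigma>\<^sup>2 \<gamma>) - 1\<close>.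

  The rest is the drift of \<open>\<tau>\<close>: for \<open>w \<ge> R\<^sub>a\<close> the contraction \<open>\<tau>(w) \<le> (1 - \<gamma> m) w\<close>
  absorbs the noise \<open>\<gamma> a (cinf + 2 a \<sigma>\<^sup>2)\<close> and leaves the factor \<open>\<lambda>\<^sub>a\<^sup>\<gamma>\<close>; for \<open>w < R\<^sub>a\<close>
  the expansion \<open>\<tau>(w) \<le> (1 + \<gamma> L) w\<close> costs the factor \<open>B\<^sub>a\<^sup>\<gamma>\<close> plus, by
  \<open>exp u - 1 \<le> u exp u\<close>, the additive term \<open>\<gamma> D\<^sub>a\<close>.\<close>

lemma phi_eq_std_normal_density: "phi = std_normal_density"
  by (simp add: fun_eq_iff phi_def std_normal_density_def powr_minus powr_half_sqrt divide_simps)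

lemma phi_nonneg: "0 \<le> phi t"
  by (simp add: phi_def)

lemma borel_measurable_phi [measurable]: "phi \<in> borel_measurable borel"
  unfolding phi_def by measurable

lemma nn_integral_phi: "(\<integral>\<^sup>+g. ennreal (phi g) \<partial>lborel) = 1"
  unfolding phi_eq_std_normal_density
  by (subst nn_integral_eq_integral)
     (auto simp: integrable_normal_moment[of 1 0 0, simplified])

lemma nn_integral_exp_affine_mult_phi:
  "(\<integral>\<^sup>+g. ennreal (exp (b + c * g) * phi g) \<partial>lborel) = ennreal (exp (b + c\<^sup>2 / 2))"
proof -
  have "exp (b + c * g) * phi g = exp (b + c\<^sup>2 / 2) * phi (g - c)" for g
  proof -
    have "exp (b + c * g) * phi g = (2 * pi) powr (-1/2) * exp (b + c * g + - g\<^sup>2 / 2)"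
      by (simp add: phi_def mult.left_commute flip: exp_add)
    also have "b + c * g + - g\<^sup>2 / 2 = b + c\<^sup>2 / 2 + - (g - c)\<^sup>2 / 2"
      by (simp add: power2_eq_square field_simps)
    also have "(2 * pi) powr (-1/2) * exp \<dots> = exp (b + c\<^sup>2 / 2) * phi (g - c)"
      by (simp add: phi_def mult.left_commute flip: exp_add)
    finally show ?thesis .
  qed
  then have "(\<integral>\<^sup>+g. ennreal (exp (b + c * g) * phi g) \<partial>lborel)
      = ennreal (exp (b + c\<^sup>2 / 2)) * (\<integral>\<^sup>+g. ennreal (phi (g - c)) \<partial>lborel)"
    by (simp add: ennreal_mult' phi_nonneg nn_integral_cmult)
  also have "(\<integral>\<^sup>+g. ennreal (phi (g - c)) \<partial>lborel) = 1"
    using nn_integral_real_affine[of "\<lambda>g. ennreal (phi g)" 1 "- c"] nn_integral_phi by simp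
  finally show ?thesis by simp
qed

lemma phi_var_ratio:
  assumes "S > 0"
  shows "phi_var S t1 / phi_var S t2 = exp ((t2\<^sup>2 - t1\<^sup>2) / (2 * S))"
proof -
  have "phi_var S t1 = phi_var S t2 * exp ((t2\<^sup>2 - t1\<^sup>2) / (2 * S))"
    unfolding phi_var_def mult.assoc exp_add[symmetric]
    using assms by (simp add: field_simps)
  moreover have "phi_var S t2 > 0"
    unfolding phi_var_def using assms by simp
  ultimately show ?thesis by simp
qed

lemma pbar_le_1: "pbar \<sigma> \<gamma> x g \<le> 1"
  by (simp add: pbar_def)

lemma borel_measurable_pbar [measurable]: "pbar \<sigma> \<gamma> x \<in> borel_measurable borel"
  unfolding pbar_def phi_var_def by measurable

lemma pbar_mult_phi:
  assumes "\<sigma> > 0" "\<gamma> > 0" "0 \<le> x" "0 \<le> x - 2 * \<sigma> * sqrt \<gamma> * g"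
  shows "pbar \<sigma> \<gamma> x g * phi g = phi (x / (\<sigma> * sqrt \<gamma>) - g)"
proof -
  define s where "s = \<sigma> * sqrt \<gamma>"
  define z where "z = - (x * (x - 2 * s * g)) / (2 * s\<^sup>2)"
  have s: "s > 0" "s\<^sup>2 = \<sigma>\<^sup>2 * \<gamma>"
    using assms by (simp_all add: s_def power_mult_distrib)
  have "phi_var (\<sigma>\<^sup>2 * \<gamma>) (x - s * g) / phi_var (\<sigma>\<^sup>2 * \<gamma>) (s * g) = exp z"
    unfolding s(2)[symmetric] z_def using s assms
    by (subst phi_var_ratio) (auto simp: power2_eq_square algebra_simps)
  moreover have "z \<le> 0"
    unfolding z_def using assms s by (simp add: s_def)
  ultimately have "pbar \<sigma> \<gamma> x g = exp z"
    by (simp add: pbar_def s_def mult.assoc)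
  moreover have "- (x / s - g)\<^sup>2 / 2 = - g\<^sup>2 / 2 + z"
    unfolding z_def using s(1) by (simp add: field_simps power2_eq_square)
  ultimately show ?thesis
    by (simp add: phi_def s_def[symmetric] exp_add[symmetric])
qed

lemma borel_measurable_Wstar [measurable]: "Wstar a \<in> borel_measurable borel"
  unfolding Wstar_def by measurable

lemma Wstar_nonpos: "0 \<le> a \<Longrightarrow> y \<le> 0 \<Longrightarrow> Wstar a y \<le> 0"
  by (simp add: Wstar_def mult_nonneg_nonpos)

lemma Wstar_reflected_pair_le:
  fixes a y \<phi> q :: real
  assumes "0 \<le> q"
  shows "Wstar a y * (\<phi> - q) + \<phi> + q \<le> exp (a * y) * \<phi> + exp (- (a * y)) * q"
proof -
  have "2 \<le> exp (a * y) + exp (- (a * y))"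
    using exp_ge_add_one_self[of "a * y"] exp_ge_add_one_self[of "- (a * y)"] by linarith
  then have "0 \<le> q * (exp (a * y) + exp (- (a * y)) - 2)"
    using assms by simp
  then show ?thesis
    by (simp add: Wstar_def algebra_simps)
qed

lemma nn_integral_reflect_halves:
  fixes h :: "real \<Rightarrow> ennreal" and y :: "real \<Rightarrow> real"
  assumes [measurable]: "h \<in> borel_measurable borel" "y \<in> borel_measurable borel"
    and y_reflect: "\<And>g. y (c - g) = - y g"
  shows "(\<integral>\<^sup>+g. h g * indicator {g. 0 \<le> y g} g + h (c - g) * indicator {g. 0 < y g} g \<partial>lborel)
    = (\<integral>\<^sup>+g. h g \<partial>lborel)"
proof -
  have "(\<integral>\<^sup>+g. h g * indicator {g. 0 \<le> y g} g + h (c - g) * indicator {g. 0 < y g} g \<partial>lborel)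
      = (\<integral>\<^sup>+g. h g * indicator {g. 0 \<le> y g} g \<partial>lborel)
        + (\<integral>\<^sup>+g. h (c - g) * indicator {g. 0 < y g} g \<partial>lborel)"
    by (rule nn_integral_add) auto
  also have "(\<integral>\<^sup>+g. h (c - g) * indicator {g. 0 < y g} g \<partial>lborel)
      = (\<integral>\<^sup>+g. h g * indicator {g. y g < 0} g \<partial>lborel)"
    using nn_integral_real_affine[of "\<lambda>g. h g * indicator {g. y g < 0} g" "-1" c]
    by (simp add: indicator_def y_reflect)
  also have "(\<integral>\<^sup>+g. h g * indicator {g. 0 \<le> y g} g \<partial>lborel) + \<dots>
      = (\<integral>\<^sup>+g. h g * indicator {g. 0 \<le> y g} g + h g * indicator {g. y g < 0} g \<partial>lborel)"
    by (rule nn_integral_add[symmetric]) auto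
  also have "\<dots> = (\<integral>\<^sup>+g. h g \<partial>lborel)"
    by (rule nn_integral_cong) (simp add: indicator_def)
  finally show ?thesis .
qed

lemma Wstar_move_pointwise_le:
  assumes "\<sigma> > 0" "\<gamma> > 0" "0 \<le> x" "0 \<le> a"
  defines "s \<equiv> \<sigma> * sqrt \<gamma>" and "y \<equiv> \<lambda>g. x - 2 * \<sigma> * sqrt \<gamma> * g"
  shows "ennreal (Wstar a (y g)) * ennreal ((1 - pbar \<sigma> \<gamma> x g) * phi g)
           + (ennreal (phi g) * indicator {g. 0 \<le> y g} g
              + ennreal (phi (x / s - g)) * indicator {g. 0 < y g} g)
         \<le> ennreal (exp (a * y g) * phi g) * indicator {g. 0 \<le> y g} g
           + ennreal (exp (a * y (x / s - g)) * phi (x / s - g)) * indicator {g. 0 < y g} g"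
proof (cases "y g > 0")
  case True
  have "y (x / s - g) = - y g"
    using assms(1,2) by (simp add: y_def s_def field_simps)
  moreover have "pbar \<sigma> \<gamma> x g * phi g = phi (x / s - g)"
    using pbar_mult_phi[OF assms(1-3)] True by (simp add: s_def y_def mult.assoc)
  ultimately have "Wstar a (y g) * ((1 - pbar \<sigma> \<gamma> x g) * phi g) + phi g + phi (x / s - g)
      \<le> exp (a * y g) * phi g + exp (a * y (x / s - g)) * phi (x / s - g)"
    using Wstar_reflected_pair_le[of "phi (x / s - g)" a "y g" "phi g"] phi_nonneg
    by (simp add: algebra_simps)
  moreover have "0 \<le> Wstar a (y g)" "0 \<le> (1 - pbar \<sigma> \<gamma> x g) * phi g"
    using True assms(4) pbar_le_1 phi_nonneg by (simp_all add: Wstar_def)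
  ultimately show ?thesis
    using True phi_nonneg[of g] phi_nonneg[of "x / s - g"]
    by (simp add: add.assoc ennreal_mult'[symmetric] ennreal_plus[symmetric] ennreal_leI
        del: ennreal_plus)
next
  case False
  then show ?thesis
    using Wstar_nonpos[OF assms(4), of "y g"] by (auto simp: ennreal_neg indicator_def)
qed

lemma nn_integral_Wstar_move_le:
  assumes "\<sigma> > 0" "\<gamma> > 0" "0 \<le> x" "0 \<le> a"
  shows "(\<integral>\<^sup>+g. ennreal (Wstar a (x - 2 * \<sigma> * sqrt \<gamma> * g))
              * ennreal ((1 - pbar \<sigma> \<gamma> x g) * phi g) \<partial>lborel)
         \<le> ennreal (exp (a * x + 2 * a\<^sup>2 * \<sigma>\<^sup>2 * \<gamma>) - 1)"
    (is "integral\<^sup>N lborel ?F \<le> _")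
proof -
  define s where "s = \<sigma> * sqrt \<gamma>"
  define y where "y g = x - 2 * \<sigma> * sqrt \<gamma> * g" for g
  define E where "E = exp (a * x + 2 * a\<^sup>2 * \<sigma>\<^sup>2 * \<gamma>)"
  have y_reflect: "y (x / s - g) = - y g" for g
    using assms(1,2) by (simp add: y_def s_def field_simps)
  have [measurable]: "y \<in> borel_measurable borel"
    unfolding y_def by measurable
  let ?halves = "\<lambda>h g. ennreal (h g) * indicator {g. 0 \<le> y g} g
                      + ennreal (h (x / s - g)) * indicator {g. 0 < y g} g"
  have "integral\<^sup>N lborel ?F + 1 = integral\<^sup>N lborel ?F + (\<integral>\<^sup>+g. ?halves phi g \<partial>lborel)"
    using nn_integral_reflect_halves[of "\<lambda>g. ennreal (phi g)" y "x / s", OF _ _ y_reflect]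
    by (simp add: nn_integral_phi)
  also have "\<dots> = (\<integral>\<^sup>+g. ?F g + ?halves phi g \<partial>lborel)"
    by (rule nn_integral_add[symmetric]) auto
  also have "\<dots> \<le> (\<integral>\<^sup>+g. ?halves (\<lambda>g. exp (a * y g) * phi g) g \<partial>lborel)"
    using Wstar_move_pointwise_le[OF assms]
    by (intro nn_integral_mono) (simp add: y_def s_def mult.assoc)
  also have "\<dots> = (\<integral>\<^sup>+g. ennreal (exp (a * x + (- 2 * a * \<sigma> * sqrt \<gamma>) * g) * phi g) \<partial>lborel)"
    using nn_integral_reflect_halves[of "\<lambda>g. ennreal (exp (a * y g) * phi g)" y "x / s",
        OF _ _ y_reflect]
    by (simp add: y_def algebra_simps)
  also have "\<dots> = ennreal E"
    unfolding nn_integral_exp_affine_mult_phi E_def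
    using assms(1,2) by (simp add: power_mult_distrib)
  also have "\<dots> = ennreal (E - 1) + 1"
    using assms by (simp add: E_def flip: ennreal_1 ennreal_plus)
  finally show ?thesis
    by (simp add: E_def ennreal_add_left_cancel_le add.commute[of _ 1])
qed

lemma Qker_Wstar_le:
  assumes "\<sigma> > 0" "\<gamma> > 0" "0 \<le> a" "0 \<le> \<tau> w + \<gamma> * cinf"
  shows "Qker \<sigma> cinf \<gamma> \<tau> (\<lambda>x. ennreal (Wstar a x)) w
           \<le> ennreal (exp (a * (\<tau> w + \<gamma> * (cinf + 2 * a * \<sigma>\<^sup>2))) - 1)"
proof -
  have "a * (\<tau> w + \<gamma> * (cinf + 2 * a * \<sigma>\<^sup>2))
      = a * (\<tau> w + \<gamma> * cinf) + 2 * a\<^sup>2 * \<sigma>\<^sup>2 * \<gamma>"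
    by (simp add: power2_eq_square algebra_simps)
  then show ?thesis
    using nn_integral_Wstar_move_le[OF assms(1,2,4,3)]
    by (simp add: Qker_def Wstar_def Let_def)
qed

lemma mono_on_le_mult_at_threshold:
  fixes t :: "real \<Rightarrow> real"
  assumes "mono_on {0..} t" "\<forall>r>R. t r / r \<le> c" "0 \<le> R" "R \<le> w"
  shows "t w \<le> c * w"
proof (rule field_le_epsilon)
  fix e :: real
  assume "0 < e"
  define d where "d = e / (\<bar>c\<bar> + 1)"
  have "0 < d" "\<bar>c\<bar> * d \<le> e"
    using \<open>0 < e\<close> by (simp_all add: d_def field_simps)
  have "t w \<le> t (w + d)"
    using assms(1,3,4) \<open>0 < d\<close> by (auto intro: mono_onD)
  also have "\<dots> \<le> c * w + c * d"
    using spec[OF assms(2), of "w + d"] assms(3,4) \<open>0 < d\<close> by (simp add: divide_le_eq distrib_left)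
  also have "c * d \<le> e"
    using \<open>\<bar>c\<bar> * d \<le> e\<close> \<open>0 < d\<close> abs_ge_self[of c] mult_right_mono[of c "\<bar>c\<bar>" d] by linarith
  finally show "t w \<le> c * w + e"
    by simp
qed

lemma exp_drift_le_contraction:
  fixes a \<gamma> m K t w Rt :: real
  assumes "0 \<le> a" "0 \<le> \<gamma>" "0 \<le> m" "t \<le> (1 - \<gamma> * m) * w" "2 * K \<le> m * w"
    and "0 \<le> Rt" "Rt \<le> w"
  shows "exp (a * (t + \<gamma> * K)) - 1 \<le> exp (- a * m * Rt / 8) powr \<gamma> * Wstar a w"
proof -
  define \<Lambda> where "\<Lambda> = exp (- a * m * Rt / 8) powr \<gamma>"
  have \<Lambda>: "\<Lambda> = exp (- (\<gamma> * (a * m * Rt / 8)))" "\<Lambda> \<le> 1"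
    using assms by (simp_all add: \<Lambda>_def exp_powr_real)
  have "m * Rt / 8 \<le> m * w - K"
    using assms mult_left_mono[of Rt w m] mult_nonneg_nonneg[of m w] by linarith
  then have "\<gamma> * (a * (m * Rt / 8)) \<le> \<gamma> * (a * (m * w - K))"
    using assms by (intro mult_left_mono) auto
  moreover have "a * (t + \<gamma> * K) \<le> a * ((1 - \<gamma> * m) * w + \<gamma> * K)"
    using assms by (simp add: mult_left_mono)
  ultimately have "a * (t + \<gamma> * K) \<le> a * w - \<gamma> * (a * m * Rt / 8)"
    by (simp add: algebra_simps)
  then have "exp (a * (t + \<gamma> * K)) - 1 \<le> \<Lambda> * exp (a * w) - 1"
    by (simp add: \<Lambda> flip: exp_add)
  also have "\<dots> \<le> \<Lambda> * (exp (a * w) - 1)"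
    using \<Lambda> by (simp add: algebra_simps)
  finally show ?thesis
    by (simp add: \<Lambda>_def Wstar_def)
qed

lemma exp_drift_le_expansion:
  fixes a \<gamma> gbar L K t w R :: real
  assumes "0 \<le> a" "0 \<le> \<gamma>" "\<gamma> \<le> gbar" "0 \<le> L" "w \<le> R" "0 \<le> K + L * R"
    and "t \<le> (1 + \<gamma> * L) * w"
  defines "\<beta> \<equiv> a * (K + L * R)"
  shows "exp (a * (t + \<gamma> * K)) - 1 \<le> exp \<beta> powr \<gamma> * Wstar a w + \<gamma> * (\<beta> * exp (gbar * \<beta>))"
proof -
  have "0 \<le> \<beta>"
    using assms by (simp add: \<beta>_def)
  have "a * (t + \<gamma> * K) \<le> a * ((1 + \<gamma> * L) * w + \<gamma> * K)"
    using assms by (simp add: mult_left_mono)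
  also have "\<dots> \<le> a * w + \<gamma> * \<beta>"
  proof -
    have "a * \<gamma> * L * w \<le> a * \<gamma> * L * R"
      using assms by (intro mult_left_mono) auto
    then show ?thesis
      by (simp add: \<beta>_def algebra_simps)
  qed
  finally have "exp (a * (t + \<gamma> * K)) - 1
      \<le> exp (\<gamma> * \<beta>) * (exp (a * w) - 1) + (exp (\<gamma> * \<beta>) - 1)"
    by (simp add: algebra_simps flip: exp_add)
  also have "exp (\<gamma> * \<beta>) - 1 \<le> \<gamma> * \<beta> * exp (\<gamma> * \<beta>)"
    using exp_ge_add_one_self[of "- (\<gamma> * \<beta>)"]
      mult_right_mono[of "1 - \<gamma> * \<beta>" "exp (- (\<gamma> * \<beta>))" "exp (\<gamma> * \<beta>)"]
    by (simp add: exp_minus field_simps)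
  also have "\<dots> \<le> \<gamma> * \<beta> * exp (gbar * \<beta>)"
    using assms \<open>0 \<le> \<beta>\<close> by (intro mult_left_mono) (auto intro: mult_right_mono)
  finally show ?thesis
    by (simp add: Wstar_def exp_powr_real mult_ac)
qed

lemma Rtilde_ge:
  "1 \<le> Rtilde \<sigma> cinf R1 m a" "R1 \<le> Rtilde \<sigma> cinf R1 m a"
  "(4 * a * \<sigma>\<^sup>2 + 2 * cinf) / m \<le> Rtilde \<sigma> cinf R1 m a"
  by (simp_all add: Rtilde_def)

lemma Rtilde_le_Rconst: "Rtilde \<sigma> cinf R1 m a \<le> Rconst \<sigma> cinf gbar R1 m a"
  by (simp add: Rconst_def Let_def)

lemma one_le_Rconst: "1 \<le> Rconst \<sigma> cinf gbar R1 m a"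
  using Rtilde_ge(1) Rtilde_le_Rconst by (rule order.trans)

lemma Dconst_ge:
  assumes "0 \<le> a"
    and "\<beta> = a * (cinf + 2 * a * \<sigma>\<^sup>2 + L * Rconst \<sigma> cinf gbar R1 m a)"
  shows "\<beta> * exp (gbar * \<beta>) \<le> Dconst \<sigma> cinf gbar R1 L m a"
proof -
  have "0 \<le> Wstar a (Rconst \<sigma> cinf gbar R1 m a)"
    using one_le_Rconst[of \<sigma> cinf gbar R1 m a] assms(1) by (simp add: Wstar_def)
  then show ?thesis
    using assms by (simp add: Dconst_def Let_def algebra_simps)
qed

lemma Wstar_drift_far:
  fixes t :: "real \<Rightarrow> real"
  assumes "0 \<le> a" "0 < m" "0 \<le> R1" "0 \<le> \<gamma>"
    and "mono_on {0..} t" "\<forall>r>R1. t r / r \<le> 1 - \<gamma> * m"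
    and "Rconst \<sigma> cinf gbar R1 m a \<le> w"
  shows "exp (a * (t w + \<gamma> * (cinf + 2 * a * \<sigma>\<^sup>2))) - 1 \<le> lam \<sigma> cinf R1 m a powr \<gamma> * Wstar a w"
proof -
  define Rt where "Rt = Rtilde \<sigma> cinf R1 m a"
  have Rt: "1 \<le> Rt" "R1 \<le> Rt" "(4 * a * \<sigma>\<^sup>2 + 2 * cinf) / m \<le> Rt" "Rt \<le> w"
    using Rtilde_ge order.trans[OF Rtilde_le_Rconst assms(7)] by (simp_all add: Rt_def)
  have "t w \<le> (1 - \<gamma> * m) * w"
    using Rt by (intro mono_on_le_mult_at_threshold[OF assms(5,6,3)]) linarith
  moreover have "2 * (cinf + 2 * a * \<sigma>\<^sup>2) \<le> m * w"
  proof -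
    have "2 * (cinf + 2 * a * \<sigma>\<^sup>2) \<le> Rt * m"
      using Rt(3) assms(2) by (simp add: divide_le_eq)
    also have "\<dots> \<le> w * m"
      using Rt(4) assms(2) by (intro mult_right_mono) auto
    finally show ?thesis
      by (simp add: mult.commute)
  qed
  ultimately show ?thesis
    using exp_drift_le_contraction Rt assms(1,2,4) by (simp add: lam_def Rt_def)
qed

lemma Wstar_drift_near:
  fixes t :: "real \<Rightarrow> real"
  assumes "0 \<le> a" "0 \<le> cinf" "0 \<le> L" "0 \<le> \<gamma>" "\<gamma> \<le> gbar" "0 \<le> w"
    and "t 0 = 0" "\<forall>r>0. t r / r \<le> 1 + \<gamma> * L"
    and "w < Rconst \<sigma> cinf gbar R1 m a"
  shows "exp (a * (t w + \<gamma> * (cinf + 2 * a * \<sigma>\<^sup>2))) - 1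
    \<le> Bconst \<sigma> cinf gbar R1 L m a powr \<gamma> * Wstar a w + \<gamma> * Dconst \<sigma> cinf gbar R1 L m a"
proof -
  define K where "K = cinf + 2 * a * \<sigma>\<^sup>2"
  define R where "R = Rconst \<sigma> cinf gbar R1 m a"
  define \<beta> where "\<beta> = a * (K + L * R)"
  have "0 \<le> R"
    using one_le_Rconst[of \<sigma> cinf gbar R1 m a] by (simp add: R_def)
  have "t w \<le> (1 + \<gamma> * L) * w"
    using assms(6-8) by (cases "w = 0") (auto simp: divide_le_eq)
  then have "exp (a * (t w + \<gamma> * K)) - 1 \<le> exp \<beta> powr \<gamma> * Wstar a w + \<gamma> * (\<beta> * exp (gbar * \<beta>))"
    unfolding \<beta>_def using assms \<open>0 \<le> R\<close> by (intro exp_drift_le_expansion) (auto simp: K_def R_def)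
  moreover have "\<gamma> * (\<beta> * exp (gbar * \<beta>)) \<le> \<gamma> * Dconst \<sigma> cinf gbar R1 L m a"
    using assms(1,4) by (intro mult_left_mono Dconst_ge) (auto simp: \<beta>_def K_def R_def)
  ultimately show ?thesis
    by (simp add: Bconst_def \<beta>_def K_def R_def)
qed

theorem proposition46:
  fixes \<sigma> gbar cinf R1 L m a :: real
    and \<tau> :: "real \<Rightarrow> real \<Rightarrow> real"
  assumes "\<sigma> > 0" and "gbar > 0" and "cinf \<ge> 0"
    and "R1 \<ge> 0" and "L \<ge> 0" and "m > 0"
    and tau_mono: "\<And>\<gamma>. 0 < \<gamma> \<Longrightarrow> \<gamma> \<le> gbar \<Longrightarrow> mono_on {0..} (\<tau> \<gamma>)"
    and tau_nonneg: "\<And>\<gamma> r. 0 < \<gamma> \<Longrightarrow> \<gamma> \<le> gbar \<Longrightarrow> 0 \<le> r \<Longrightarrow> 0 \<le> \<tau> \<gamma> r"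
    and tau_zero: "\<And>\<gamma>. 0 < \<gamma> \<Longrightarrow> \<gamma> \<le> gbar \<Longrightarrow> \<tau> \<gamma> 0 = 0"
    and tau_L: "\<And>\<gamma>. 0 < \<gamma> \<Longrightarrow> \<gamma> \<le> gbar \<Longrightarrow> \<forall>r>0. \<tau> \<gamma> r / r \<le> 1 + \<gamma> * L"
    and tau_m: "\<And>\<gamma>. 0 < \<gamma> \<Longrightarrow> \<gamma> \<le> gbar \<Longrightarrow> \<forall>r>R1. \<tau> \<gamma> r / r \<le> 1 - \<gamma> * m"
    and "a > 0"
    and "w \<ge> 0"
    and "0 < \<gamma>" and "\<gamma> \<le> gamma1 \<sigma> cinf gbar R1 m a"
  shows "Qker \<sigma> cinf \<gamma> (\<tau> \<gamma>) (\<lambda>x. ennreal (Wstar a x)) w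
    \<le> ennreal (lam \<sigma> cinf R1 m a powr \<gamma> * Wstar a w
                 * indicator {Rconst \<sigma> cinf gbar R1 m a..} w
             + Bconst \<sigma> cinf gbar R1 L m a powr \<gamma> * Wstar a w
                 * indicator {0..<Rconst \<sigma> cinf gbar R1 m a} w
             + \<gamma> * Dconst \<sigma> cinf gbar R1 L m a
                 * indicator {0..<Rconst \<sigma> cinf gbar R1 m a} w)"
proof -
  have \<gamma>: "0 < \<gamma>" "\<gamma> \<le> gbar"
    using assms(14,15) by (simp_all add: gamma1_def)
  define R where "R = Rconst \<sigma> cinf gbar R1 m a"
  have "Qker \<sigma> cinf \<gamma> (\<tau> \<gamma>) (\<lambda>x. ennreal (Wstar a x)) w
      \<le> ennreal (exp (a * (\<tau> \<gamma> w + \<gamma> * (cinf + 2 * a * \<sigma>\<^sup>2))) - 1)"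
    using assms tau_nonneg[OF \<gamma>] by (intro Qker_Wstar_le) auto
  moreover have "exp (a * (\<tau> \<gamma> w + \<gamma> * (cinf + 2 * a * \<sigma>\<^sup>2))) - 1
      \<le> lam \<sigma> cinf R1 m a powr \<gamma> * Wstar a w * indicator {R..} w
        + Bconst \<sigma> cinf gbar R1 L m a powr \<gamma> * Wstar a w * indicator {0..<R} w
        + \<gamma> * Dconst \<sigma> cinf gbar R1 L m a * indicator {0..<R} w"
  proof (cases "R \<le> w")
    case True
    then show ?thesis
      using Wstar_drift_far[OF _ _ _ _ tau_mono[OF \<gamma>] tau_m[OF \<gamma>]] assms
      by (simp add: R_def)
  next
    case False
    then show ?thesis
      using Wstar_drift_near[OF _ _ _ _ _ _ tau_zero[OF \<gamma>] tau_L[OF \<gamma>]] assms \<gamma>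
      by (simp add: R_def)
  qed
  ultimately show ?thesis
    unfolding R_def by (auto intro: order.trans ennreal_leI)
qed

end
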